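(* For $|q|<1$, \begin{align*} \phi(q)+\sum_{r=1}^{\infty}(-1;q^2)_rq^r&=\sum_{n=-\infty}^{\infty}\frac{q^{n^2}}{(-q^2;q^2)_n}=\frac{(-q,-q,q^2;q^2)_{\infty}}{(q,-q^2;q^2)_{\infty}},\\ \nu(q)+\sum_{r=0}^{\infty}(-q;q^2)_rq^r&=\sum_{n=-\infty}^{\infty}\frac{q^{n^2+n}}{(-q;q^2)_{n+1}}=2(-q^2,-q^2;q^2)_{\infty}(q^4;q^4)_{\infty},\\ \psi(q)+\sum_{r=0}^{\infty}(q;q^2)_r(-1)^r&=\sum_{n=-\infty}^{\infty}\frac{q^{n^2}}{(q;q^2)_n}=\frac{(-q,-q,q^2;q^2)_{\infty}}{2(q,-q^2;q^2)_{\infty}}, \end{align*} where in the third identity the series $\sum_{r\ge0}(q;q^2)_r(-1)^r$ (equivalently the part of the bilateral series with negative index) is summed in the Cesàro sense.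
   Context: For $n\ge 0$, $(a;q)_n=\prod_{j=0}^{n-1}(1-aq^j)$, $(a;q)_\infty=\prod_{j\ge0}(1-aq^j)$, and for negative index $(a;q)_{-n}=1/(aq^{-n};q)_n$. Also $(a_1,\dots,a_k;q)_n=(a_1;q)_n\cdots(a_k;q)_n$ (same for $n=\infty$). Third order mock theta functions: $\phi(q)=\sum_{n\ge0}\frac{q^{n^2}}{(-q^2;q^2)_n}$, $\psi(q)=\sum_{n\ge1}\frac{q^{n^2}}{(q;q^2)_n}$, $\nu(q)=\sum_{n\ge0}\frac{q^{n^2+n}}{(-q;q^2)_{n+1}}$. *)

theory Defs
  imports "HOL-Analysis.Analysis"
begin

definition qpoch :: "complex \<Rightarrow> complex \<Rightarrow> nat \<Rightarrow> complex" where
  "qpoch a b n = (\<Prod>j<n. (1 - a * b ^ j))"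

definition qpochZ :: "complex \<Rightarrow> complex \<Rightarrow> int \<Rightarrow> complex" where
  "qpochZ a b n = (if 0 \<le> n then qpoch a b (nat n)
                   else 1 / qpoch (a * b powi n) b (nat (- n)))"

definition qinf :: "complex \<Rightarrow> complex \<Rightarrow> complex" where
  "qinf a b = (\<Prod>j. (1 - a * b ^ j))"

definition mock_phi :: "complex \<Rightarrow> complex" where
  "mock_phi q = (\<Sum>n. q ^ (n^2) / qpoch (- (q^2)) (q^2) n)"

definition mock_psi :: "complex \<Rightarrow> complex" where
  "mock_psi q = (\<Sum>n. q ^ ((Suc n)^2) / qpoch q (q^2) (Suc n))"

definition mock_nu :: "complex \<Rightarrow> complex" where
  "mock_nu q = (\<Sum>n. q ^ (n^2 + n) / qpoch (- q) (q^2) (Suc n))"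

definition cesaro_sums :: "(nat \<Rightarrow> complex) \<Rightarrow> complex \<Rightarrow> bool" where
  "cesaro_sums f s \<longleftrightarrow>
     (\<lambda>N. (\<Sum>n\<le>N. \<Sum>k\<le>n. f k) / of_nat (Suc N)) \<longlonglongrightarrow> s"

end

theory Submission
  imports Defs
begin

text \<open>
  All three identities are specialisations, with base q^2, of the bilateral summation
  sum_n (-1)^n p^(n(n-1)/2) x^n / (b;p)_n = (p, x, p/x; p)_inf / (b, b/x; p)_inf,
  a limiting case of Ramanujan's 1psi1 sum. Writing 1/(b;p)_n = (b p^n;p)_inf / (b;p)_inf and
  expanding (b p^n;p)_inf by Euler's series, a shift of the summation index turns the left-hand
  side into the product of the triple product series with Euler's series for 1/(b/x;p)_inf.
  The Jacobi triple product itself is the case b = p of the same computation, where every term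
  of negative index vanishes.

  The nonnegative part of each bilateral series is the mock theta function, and by the reflection
  formula for (a;p)_(-n) the negative part is the companion series. For psi the negative part
  diverges, but its partial sums S_N satisfy S_N + S_(N+1) --> L, which forces Cesaro
  convergence to L/2.
\<close>

lemma qpoch_0 [simp]: "qpoch a b 0 = 1"
  by (simp add: qpoch_def)

lemma qpoch_0_left [simp]: "qpoch 0 b n = 1"
  by (simp add: qpoch_def)

lemma qinf_0_left [simp]: "qinf 0 b = 1"
  by (simp add: qinf_def)

lemma qpoch_Suc: "qpoch a b (Suc n) = qpoch a b n * (1 - a * b ^ n)"
  by (simp add: qpoch_def)

lemma qpoch_Suc_shift: "qpoch a b (Suc n) = (1 - a) * qpoch (a * b) b n"
  unfolding qpoch_def by (subst prod.lessThan_Suc_shift) (simp add: mult.assoc)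

lemma qpochZ_of_nat [simp]: "qpochZ a b (int m) = qpoch a b m"
  by (simp add: qpochZ_def)

lemma qpochZ_neg_of_nat: "qpochZ a b (- int m) = 1 / qpoch (a * b powi (- int m)) b m"
  unfolding qpochZ_def by (cases "m = 0") auto

lemma mult_power_neq_one:
  fixes a p :: complex
  assumes "norm a < 1" "norm p \<le> 1"
  shows "a * p ^ j \<noteq> 1"
proof -
  have "norm a * norm p ^ j < 1"
    using assms by (smt (verit) mult_left_le norm_ge_zero power_le_one)
  then show ?thesis
    by (metis norm_mult norm_one norm_power order_less_irrefl)
qed

lemma norm_power_less_one:
  fixes q :: complex
  assumes "norm q < 1" "n > 0"
  shows "norm (q ^ n) < 1"
  using assms by (simp add: norm_power power_less_one_iff)

lemma qpoch_nonzero: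
  fixes a p :: complex
  assumes "norm a < 1" "norm p \<le> 1"
  shows "qpoch a p n \<noteq> 0"
  using mult_power_neq_one[OF assms] by (auto simp: qpoch_def prod_zero_iff)

lemma convergent_prod_qinf:
  fixes a p :: complex
  assumes "norm p < 1"
  shows "convergent_prod (\<lambda>j. 1 - a * p ^ j)"
proof -
  have "summable (\<lambda>j. norm a * norm p ^ j)"
    using assms by (intro summable_mult summable_geometric) auto
  then have "summable (\<lambda>j. norm ((1 - a * p ^ j) - 1))"
    by (simp add: norm_mult norm_power)
  then show ?thesis
    by (intro abs_convergent_prod_imp_convergent_prod summable_imp_abs_convergent_prod)
qed

lemma qinf_has_prod:
  assumes "norm p < 1"
  shows "(\<lambda>j. 1 - a * p ^ j) has_prod qinf a p"
  unfolding qinf_def using convergent_prod_qinf[OF assms] by (simp add: convergent_prod_has_prod)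

lemma qpoch_LIMSEQ_qinf:
  assumes "norm p < 1"
  shows "(\<lambda>n. qpoch a p n) \<longlonglongrightarrow> qinf a p"
  unfolding qpoch_def using has_prod_imp_tendsto'[OF qinf_has_prod[OF assms]] .

lemma qinf_split:
  assumes "norm p < 1"
  shows "qinf a p = qpoch a p n * qinf (a * p ^ n) p"
proof -
  have "(\<lambda>j. 1 - a * p ^ j) has_prod ((\<Prod>k<n. 1 - a * p ^ k) * (\<Prod>k. 1 - a * p ^ (k + n)))"
    by (rule has_prod_ignore_initial_segment'[OF convergent_prod_qinf[OF assms]])
  then have "qinf a p = (\<Prod>k<n. 1 - a * p ^ k) * (\<Prod>k. 1 - a * p ^ (k + n))"
    using qinf_has_prod[OF assms] has_prod_unique2 by blast
  also have "(\<Prod>k. 1 - a * p ^ (k + n)) = qinf (a * p ^ n) p"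
    unfolding qinf_def by (simp add: power_add mult_ac)
  finally show ?thesis by (simp add: qpoch_def)
qed

lemma qinf_split_first:
  assumes "norm p < 1"
  shows "qinf a p = (1 - a) * qinf (a * p) p"
  using qinf_split[OF assms, of a 1] by (simp add: qpoch_def)

lemma qinf_eq_0:
  assumes "norm p < 1" "a * p ^ j = 1"
  shows "qinf a p = 0"
  using has_prod_zeroI[OF qinf_has_prod[OF assms(1)], where n=j] assms(2) by simp

lemma qinf_nonzero:
  fixes a p :: complex
  assumes "norm p < 1" "norm a < 1"
  shows "qinf a p \<noteq> 0"
proof
  assume "qinf a p = 0"
  then obtain j where "1 - a * p ^ j = 0"
    using has_prod_eq_0_iff[OF qinf_has_prod[OF assms(1)]] by auto
  with mult_power_neq_one[of a p j] assms show False by simp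
qed

lemma qinf_mult_power_int:
  fixes p b :: complex
  assumes p: "norm p < 1" "p \<noteq> 0" and b: "qinf b p \<noteq> 0"
  shows "qinf (b * p powi n) p = qinf b p / qpochZ b p n"
proof (cases "n \<ge> 0")
  case True
  then obtain m where n: "n = int m" by (metis nonneg_int_cases)
  have split: "qinf b p = qpoch b p m * qinf (b * p ^ m) p" by (rule qinf_split[OF p(1)])
  then have "qpoch b p m \<noteq> 0" using b by auto
  with split show ?thesis unfolding n by (simp add: field_simps)
next
  case False
  define m where "m = nat (- n)"
  have n: "n = - int m" using False m_def by simp
  have b_shift: "b * p powi n * p ^ m = b"
    unfolding n power_int_minus power_int_of_nat using p(2) by (simp add: field_simps)
  have "qinf (b * p powi n) p = qpoch (b * p powi n) p m * qinf b p"
    using qinf_split[OF p(1), of "b * p powi n" m] unfolding b_shift .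
  then show ?thesis unfolding n qpochZ_neg_of_nat by simp
qed

lemma qpoch_reflect:
  fixes a p :: complex
  assumes p: "p \<noteq> 0" and a: "a \<noteq> 0"
  shows "qpoch (a * p powi (- int m)) p m = (-a) ^ m * qpoch (p / a) p m / p ^ (Suc m choose 2)"
proof -
  have "qpoch (a * p powi (- int m)) p m = (\<Prod>i<m. 1 - a * p powi (- int m) * p ^ (m - Suc i))"
    unfolding qpoch_def by (rule prod.nat_diff_reindex[symmetric])
  also have "\<dots> = (\<Prod>i<m. 1 - a / p ^ Suc i)"
  proof (rule prod.cong)
    fix i assume "i \<in> {..<m}"
    then have "m = (m - Suc i) + Suc i" by simp
    then have "p ^ m = p ^ (m - Suc i) * p ^ Suc i" by (metis power_add)
    then show "1 - a * p powi (- int m) * p ^ (m - Suc i) = 1 - a / p ^ Suc i"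
      unfolding power_int_minus power_int_of_nat using p by (simp add: field_simps)
  qed simp
  also have "\<dots> = (-a) ^ m * qpoch (p / a) p m / p ^ (Suc m choose 2)"
  proof (induction m)
    case (Suc m)
    have "(Suc (Suc m) choose 2) = (Suc m choose 2) + Suc m"
      by (simp add: numeral_2_eq_2)
    with Suc show ?case
      unfolding qpoch_Suc using p a by (simp add: field_simps power_add)
  qed (simp add: choose_two)
  finally show ?thesis .
qed

lemma power2_power_Suc_choose_2: "(q^2) ^ (Suc m choose 2) = (q::'a::monoid_mult) ^ (m * m + m)"
proof -
  have "2 * (Suc m choose 2) = m * m + m"
    by (simp add: choose_two)
  then show ?thesis
    by (metis power_mult)
qed

lemma inverse_qpochZ_neg_square_base:
  fixes q a :: complex
  assumes q: "q \<noteq> 0" and a: "a \<noteq> 0"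
  shows "1 / qpochZ a (q^2) (- int m) = (-a) ^ m * qpoch (q^2 / a) (q^2) m / q ^ (m * m + m)"
  unfolding qpochZ_neg_of_nat using qpoch_reflect[of "q^2" a m] q a
  by (simp add: power2_power_Suc_choose_2)

lemma prodinf_even_odd:
  fixes f :: "nat \<Rightarrow> complex"
  assumes "convergent_prod f" "convergent_prod (\<lambda>i. f (2 * i))" "convergent_prod (\<lambda>i. f (2 * i + 1))"
  shows "prodinf f = prodinf (\<lambda>i. f (2 * i)) * prodinf (\<lambda>i. f (2 * i + 1))"
proof -
  have "strict_mono (\<lambda>n::nat. 2 * n)" by (auto simp: strict_mono_def)
  then have "(\<lambda>n. \<Prod>k<2 * n. f k) \<longlonglongrightarrow> prodinf f"
    using LIMSEQ_subseq_LIMSEQ[OF has_prod_imp_tendsto'[OF convergent_prod_has_prod[OF assms(1)]]]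
    by (simp add: o_def)
  moreover have "(\<Prod>k<2 * n. f k) = (\<Prod>k<n. f (2 * k)) * (\<Prod>k<n. f (2 * k + 1))" for n
    by (induction n) (simp_all add: mult_ac)
  moreover have "(\<lambda>n. (\<Prod>k<n. f (2 * k)) * (\<Prod>k<n. f (2 * k + 1))) \<longlonglongrightarrow>
           prodinf (\<lambda>i. f (2 * i)) * prodinf (\<lambda>i. f (2 * i + 1))"
    by (intro tendsto_mult has_prod_imp_tendsto' convergent_prod_has_prod assms)
  ultimately show ?thesis using LIMSEQ_unique by fastforce
qed

lemma qinf_square_base_split:
  fixes q :: complex
  assumes q: "norm q < 1"
  shows "qinf (q^2) (q^2) = qinf q (q^2) * qinf (-q) (q^2) * qinf (q^4) (q^4)"
proof -
  have q2: "norm (q^2) < 1" "norm (q^4) < 1"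
    using q by (auto simp: norm_power power_less_one_iff)
  have even: "(\<lambda>i. 1 - q^2 * (q^2)^(2*i)) = (\<lambda>i. 1 - q^2 * (q^4)^i)"
    by (simp flip: power_mult)
  have odd: "(\<lambda>i. 1 - q^2 * (q^2)^(2*i+1)) = (\<lambda>i. 1 - q^4 * (q^4)^i)"
    by (simp add: power_add mult_ac flip: power_mult)
  have "qinf (q^2) (q^2) = qinf (q^2) (q^4) * qinf (q^4) (q^4)"
    unfolding qinf_def
    by (subst prodinf_even_odd) (simp_all only: even odd convergent_prod_qinf q2)
  also have "qinf (q^2) (q^4) = qinf q (q^2) * qinf (-q) (q^2)"
  proof -
    have "qinf q (q^2) * qinf (-q) (q^2) = (\<Prod>j. (1 - q * (q^2)^j) * (1 - (-q) * (q^2)^j))"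
      unfolding qinf_def by (rule prodinf_mult[OF convergent_prod_qinf convergent_prod_qinf]; fact)
    also have "(\<lambda>j. (1 - q * (q^2)^j) * (1 - (-q) * (q^2)^j)) = (\<lambda>j. 1 - q^2 * (q^4)^j)"
    proof
      fix j
      have "(q^4)^j = (q^2 * q^2)^j"
        by (simp flip: power_add)
      also have "\<dots> = (q^2)^j * (q^2)^j"
        by (rule power_mult_distrib)
      finally have "(q^4)^j = (q^2)^j * (q^2)^j" .
      then show "(1 - q * (q^2)^j) * (1 - (-q) * (q^2)^j) = 1 - q^2 * (q^4)^j"
        by (simp add: algebra_simps power2_eq_square)
    qed
    finally show ?thesis by (simp add: qinf_def)
  qed
  finally show ?thesis by (simp add: mult_ac)
qed

section \<open>Euler's expansions of the infinite q-Pochhammer symbol and its inverse\<close>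

lemma summable_norm_ratio_LIMSEQ:
  fixes f :: "nat \<Rightarrow> 'a::banach"
  assumes le: "\<And>n. norm (f (Suc n)) \<le> r n * norm (f n)"
    and lim: "r \<longlonglongrightarrow> L" and L: "L < 1"
  shows "summable (\<lambda>n. norm (f n))"
proof -
  define c where "c = (L + 1) / 2"
  have "c < 1" "L < c" using L by (auto simp: c_def)
  then obtain N where N: "\<And>n. n \<ge> N \<Longrightarrow> r n < c"
    using order_tendstoD(2)[OF lim] by (auto simp: eventually_sequentially)
  show ?thesis
  proof (rule summable_ratio_test[OF \<open>c < 1\<close>, of N])
    fix n assume "n \<ge> N"
    have "norm (f (Suc n)) \<le> r n * norm (f n)" by (rule le)
    also have "\<dots> \<le> c * norm (f n)"
      using N[OF \<open>n \<ge> N\<close>] by (intro mult_right_mono) auto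
    finally show "norm (norm (f (Suc n))) \<le> c * norm (norm (f n))" by simp
  qed
qed

lemma norm_one_minus_power_Suc_ge:
  fixes p :: complex
  assumes "norm p < 1"
  shows "norm (1 - p ^ Suc k) \<ge> 1 - norm p ^ Suc k" and "1 - norm p ^ Suc k \<ge> 1 - norm p"
proof -
  show "norm (1 - p ^ Suc k) \<ge> 1 - norm p ^ Suc k"
    using norm_triangle_ineq2[of 1 "p ^ Suc k"] by (simp add: norm_power norm_mult)
  show "1 - norm p ^ Suc k \<ge> 1 - norm p"
    using assms by (simp add: power_le_one mult_left_le)
qed

lemma one_minus_power_Suc_nonzero:
  fixes p :: complex
  assumes "norm p < 1"
  shows "1 - p ^ Suc k \<noteq> 0"
  using mult_power_neq_one[of p p k] assms by auto

definition euler_coeff :: "complex \<Rightarrow> nat \<Rightarrow> complex" where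
  "euler_coeff p k = (-1) ^ k * p ^ (k choose 2) / qpoch p p k"

lemma euler_coeff_0 [simp]: "euler_coeff p 0 = 1"
  by (simp add: euler_coeff_def numeral_2_eq_2)

lemma euler_coeff_Suc:
  fixes p :: complex
  assumes "norm p < 1"
  shows "euler_coeff p (Suc k) * (1 - p ^ Suc k) = - (p ^ k * euler_coeff p k)"
proof -
  have "qpoch p p k \<noteq> 0" "1 - p ^ Suc k \<noteq> 0"
    using qpoch_nonzero[of p p k] one_minus_power_Suc_nonzero[of p k] assms by auto
  moreover have "(Suc k choose 2) = (k choose 2) + k"
    by (simp add: numeral_2_eq_2)
  ultimately show ?thesis
    unfolding euler_coeff_def qpoch_Suc by (simp add: field_simps power_add)
qed

lemma summable_euler_series:
  fixes p z :: complex
  assumes p: "norm p < 1"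
  shows "summable (\<lambda>k. norm (euler_coeff p k * z ^ k))"
proof (rule summable_norm_ratio_LIMSEQ)
  fix n
  have bound: "norm (1 - p ^ Suc n) \<ge> 1 - norm p" "1 - norm p > 0"
    using norm_one_minus_power_Suc_ge[OF p, of n] p by auto
  have "euler_coeff p (Suc n) = - (p ^ n * euler_coeff p n) / (1 - p ^ Suc n)"
    using euler_coeff_Suc[OF p, of n] one_minus_power_Suc_nonzero[OF p, of n]
    by (simp add: field_simps)
  then have "norm (euler_coeff p (Suc n) * z ^ Suc n)
             = norm p ^ n * norm z * norm (euler_coeff p n * z ^ n) / norm (1 - p ^ Suc n)"
    by (simp add: norm_mult norm_divide norm_power)
  also have "\<dots> \<le> norm p ^ n * norm z * norm (euler_coeff p n * z ^ n) / (1 - norm p)"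
    using bound by (intro divide_left_mono mult_pos_pos) auto
  finally show "norm (euler_coeff p (Suc n) * z ^ Suc n)
             \<le> (norm p ^ n * norm z / (1 - norm p)) * norm (euler_coeff p n * z ^ n)"
    by simp
next
  show "(\<lambda>n. norm p ^ n * norm z / (1 - norm p)) \<longlonglongrightarrow> 0 * norm z / (1 - norm p)"
    using p by (intro tendsto_intros LIMSEQ_power_zero) auto
qed simp

lemma summable_inverse_qpoch_series:
  fixes p w :: complex
  assumes p: "norm p < 1" and w: "norm w < 1"
  shows "summable (\<lambda>k. norm (w ^ k / qpoch p p k))"
proof (rule summable_norm_ratio_LIMSEQ)
  fix n
  have bound: "norm (1 - p ^ Suc n) \<ge> 1 - norm p ^ Suc n" "1 - norm p ^ Suc n > 0"
    using norm_one_minus_power_Suc_ge[OF p, of n] p by auto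
  have "norm (w ^ Suc n / qpoch p p (Suc n)) = norm w * norm (w ^ n / qpoch p p n) / norm (1 - p ^ Suc n)"
    by (simp add: qpoch_Suc norm_mult norm_divide norm_power)
  also have "\<dots> \<le> norm w * norm (w ^ n / qpoch p p n) / (1 - norm p ^ Suc n)"
    using bound by (intro divide_left_mono mult_pos_pos) auto
  finally show "norm (w ^ Suc n / qpoch p p (Suc n))
             \<le> (norm w / (1 - norm p ^ Suc n)) * norm (w ^ n / qpoch p p n)"
    by simp
next
  have "(\<lambda>n. norm p * norm p ^ n) \<longlonglongrightarrow> norm p * 0"
    using p by (intro tendsto_intros LIMSEQ_power_zero) auto
  then show "(\<lambda>n. norm w / (1 - norm p ^ Suc n)) \<longlonglongrightarrow> norm w / (1 - 0)"
    by (intro tendsto_intros) auto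
qed (use w in simp)

lemma euler_series_sums_qinf:
  fixes p z :: complex
  assumes p: "norm p < 1"
  shows "(\<lambda>k. euler_coeff p k * z ^ k) sums qinf z p"
proof -
  define H where "H = (\<lambda>z. \<Sum>k. euler_coeff p k * z ^ k)"
  have H_sums: "(\<lambda>k. euler_coeff p k * w ^ k) sums H w" for w
    unfolding H_def by (rule summable_sums, rule summable_norm_cancel, rule summable_euler_series[OF p])
  have functional_eq: "H w = (1 - w) * H (p * w)" for w
  proof -
    have "euler_coeff p (Suc j) * w ^ Suc j - euler_coeff p (Suc j) * (p * w) ^ Suc j
          = - w * (euler_coeff p j * (p * w) ^ j)" for j
    proof -
      have "euler_coeff p (Suc j) * w ^ Suc j - euler_coeff p (Suc j) * (p * w) ^ Suc j
            = (euler_coeff p (Suc j) * (1 - p ^ Suc j)) * w ^ Suc j"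
        by (simp add: power_mult_distrib algebra_simps)
      also have "\<dots> = - w * (euler_coeff p j * (p * w) ^ j)"
        unfolding euler_coeff_Suc[OF p] by (simp add: power_mult_distrib algebra_simps)
      finally show ?thesis .
    qed
    then have "(\<lambda>j. euler_coeff p (Suc j) * w ^ Suc j - euler_coeff p (Suc j) * (p * w) ^ Suc j)
               sums (- w * H (p * w))"
      using sums_mult[OF H_sums[of "p * w"], of "- w"] by simp
    then have "(\<lambda>k. euler_coeff p k * w ^ k - euler_coeff p k * (p * w) ^ k) sums (- w * H (p * w))"
      by (subst (asm) sums_Suc_iff) simp
    then have "H w - H (p * w) = - w * H (p * w)"
      using sums_diff[OF H_sums[of w] H_sums[of "p * w"]] sums_unique2 by blast
    then show ?thesis by (simp add: algebra_simps)
  qed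
  have iterate: "H w = qpoch w p n * H (p ^ n * w)" for n w
  proof (induction n arbitrary: w)
    case (Suc n)
    have "H w = (1 - w) * (qpoch (p * w) p n * H (p ^ n * (p * w)))"
      using functional_eq[of w] Suc[of "p * w"] by simp
    then show ?case by (simp add: qpoch_Suc_shift mult_ac)
  qed simp
  have "isCont H 0"
    unfolding H_def
    by (rule isCont_powser_converges_everywhere, rule summable_norm_cancel, rule summable_euler_series[OF p])
  moreover have "(\<lambda>n. p ^ n * z) \<longlonglongrightarrow> 0"
    using tendsto_mult_left_zero[OF LIMSEQ_power_zero[OF p]] .
  ultimately have "(\<lambda>n. H (p ^ n * z)) \<longlonglongrightarrow> H 0"
    by (rule isCont_tendsto_compose)
  moreover have "H 0 = 1"
    unfolding H_def powser_zero by simp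
  ultimately have "(\<lambda>n. qpoch z p n * H (p ^ n * z)) \<longlonglongrightarrow> qinf z p * 1"
    by (intro tendsto_intros qpoch_LIMSEQ_qinf p) auto
  then have "H z = qinf z p"
    using iterate[of z] by (simp add: LIMSEQ_const_iff)
  with H_sums[of z] show ?thesis by simp
qed

lemma inverse_qpoch_series_sums:
  fixes p w :: complex
  assumes p: "norm p < 1" and w: "norm w < 1"
  shows "(\<lambda>k. w ^ k / qpoch p p k) sums (1 / qinf w p)"
proof -
  define G where "G = (\<lambda>u. \<Sum>k. u ^ k / qpoch p p k)"
  have G_sums: "norm u < 1 \<Longrightarrow> (\<lambda>k. u ^ k / qpoch p p k) sums G u" for u
    unfolding G_def by (rule summable_sums, rule summable_norm_cancel, rule summable_inverse_qpoch_series[OF p])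
  have small: "norm (p ^ n * u) < 1" if "norm u < 1" for n u
  proof -
    have "norm (p ^ n * u) = norm p ^ n * norm u"
      by (simp add: norm_mult norm_power)
    also have "\<dots> \<le> norm u"
      using p by (intro mult_left_le_one_le) (auto simp: power_le_one)
    finally show ?thesis using that by simp
  qed
  have functional_eq: "G (p * u) = (1 - u) * G u" if u: "norm u < 1" for u
  proof -
    have pu: "norm (p * u) < 1" using small[OF u, of 1] by simp
    have "u ^ Suc j / qpoch p p (Suc j) - (p * u) ^ Suc j / qpoch p p (Suc j)
          = u * (u ^ j / qpoch p p j)" for j
    proof -
      have "u ^ Suc j / qpoch p p (Suc j) - (p * u) ^ Suc j / qpoch p p (Suc j)
            = u ^ Suc j * (1 - p ^ Suc j) / (qpoch p p j * (1 - p ^ Suc j))"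
        by (simp add: qpoch_Suc power_mult_distrib algebra_simps diff_divide_distrib)
      then show ?thesis
        using one_minus_power_Suc_nonzero[OF p, of j] by simp
    qed
    then have "(\<lambda>j. u ^ Suc j / qpoch p p (Suc j) - (p * u) ^ Suc j / qpoch p p (Suc j)) sums (u * G u)"
      using sums_mult[OF G_sums[OF u], of u] by simp
    then have "(\<lambda>k. u ^ k / qpoch p p k - (p * u) ^ k / qpoch p p k) sums (u * G u)"
      by (subst (asm) sums_Suc_iff) simp
    then have "G u - G (p * u) = u * G u"
      using sums_diff[OF G_sums[OF u] G_sums[OF pu]] sums_unique2 by blast
    then show ?thesis by (simp add: algebra_simps)
  qed
  have iterate: "G (p ^ n * u) = qpoch u p n * G u" if "norm u < 1" for n u
    using that
  proof (induction n arbitrary: u)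
    case (Suc n)
    have pu: "norm (p * u) < 1" using small[OF Suc.prems, of 1] by simp
    have "G (p ^ Suc n * u) = G (p ^ n * (p * u))"
      by (simp add: mult_ac)
    also have "\<dots> = qpoch (p * u) p n * ((1 - u) * G u)"
      using Suc.IH[OF pu] functional_eq[OF Suc.prems] by simp
    finally show ?case by (simp add: qpoch_Suc_shift mult_ac)
  qed simp
  have "isCont (\<lambda>u. \<Sum>k. 1 / qpoch p p k * u ^ k) 0"
  proof (rule isCont_powser)
    show "summable (\<lambda>k. 1 / qpoch p p k * (1/2) ^ k)"
      using summable_norm_cancel[OF summable_inverse_qpoch_series[OF p, of "1/2"]] by simp
  qed simp
  then have "isCont G 0"
    by (simp add: G_def)
  moreover have "(\<lambda>n. p ^ n * w) \<longlonglongrightarrow> 0"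
    using tendsto_mult_left_zero[OF LIMSEQ_power_zero[OF p]] .
  ultimately have "(\<lambda>n. G (p ^ n * w)) \<longlonglongrightarrow> G 0"
    by (rule isCont_tendsto_compose)
  then have "(\<lambda>n. qpoch w p n * G w) \<longlonglongrightarrow> G 0"
    using iterate[OF w] by simp
  moreover have "(\<lambda>n. qpoch w p n * G w) \<longlonglongrightarrow> qinf w p * G w"
    by (intro tendsto_intros qpoch_LIMSEQ_qinf p)
  moreover have "G 0 = 1"
    using powser_zero[of "\<lambda>k. 1 / qpoch p p k"] by (simp add: G_def)
  ultimately have "qinf w p * G w = 1"
    using LIMSEQ_unique by metis
  then have "G w = 1 / qinf w p"
    by (metis mult.commute mult_zero_left nonzero_eq_divide_eq zero_neq_one)
  with G_sums[OF w] show ?thesis by simp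
qed

lemma UNIV_int_eq_nonneg_Un_neg: "(UNIV :: int set) = range int \<union> range (\<lambda>m. - int (Suc m))"
proof -
  have "n \<in> range int \<union> range (\<lambda>m. - int (Suc m))" for n :: int
  proof (cases "n \<ge> 0")
    case True
    then show ?thesis by (metis UnI1 nonneg_int_cases rangeI)
  next
    case False
    then have "n = - int (Suc (nat (- n - 1)))" by simp
    then show ?thesis by blast
  qed
  then show ?thesis by auto
qed

lemma nonneg_int_range_disjoint_neg: "range int \<inter> range (\<lambda>m. - int (Suc m)) = {}"
  by auto

lemma abs_summable_on_int:
  fixes f :: "int \<Rightarrow> complex"
  assumes "summable (\<lambda>n. norm (f (int n)))" "summable (\<lambda>m. norm (f (- int (Suc m))))"
  shows "(\<lambda>n. norm (f n)) summable_on UNIV"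
proof -
  have "((\<lambda>n. norm (f n)) \<circ> int) summable_on UNIV"
    using norm_summable_imp_summable_on[of "\<lambda>n. norm (f (int n))"] assms(1) by (simp add: o_def)
  then have nonneg: "(\<lambda>n. norm (f n)) summable_on range int"
    by (subst summable_on_reindex) auto
  have "((\<lambda>n. norm (f n)) \<circ> (\<lambda>m. - int (Suc m))) summable_on UNIV"
    using norm_summable_imp_summable_on[of "\<lambda>m. norm (f (- int (Suc m)))"] assms(2) by (simp add: o_def)
  then have neg: "(\<lambda>n. norm (f n)) summable_on range (\<lambda>m. - int (Suc m))"
    by (subst summable_on_reindex) (auto simp: inj_def)
  show ?thesis
    using summable_on_Un_disjoint[OF nonneg neg nonneg_int_range_disjoint_neg]
    unfolding UNIV_int_eq_nonneg_Un_neg[symmetric] .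
qed

lemma has_sum_int_imp_sums:
  fixes f :: "int \<Rightarrow> complex"
  assumes "(f has_sum S) UNIV"
  obtains A B where "(\<lambda>n. f (int n)) sums A" "(\<lambda>m. f (- int (Suc m))) sums B" "S = A + B"
proof -
  have f: "f summable_on UNIV" using assms summable_on_def by blast
  define A where "A = infsum f (range int)"
  define B where "B = infsum f (range (\<lambda>m. - int (Suc m)))"
  have A: "(f has_sum A) (range int)"
    unfolding A_def by (intro has_sum_infsum summable_on_subset_banach[OF f]) auto
  have B: "(f has_sum B) (range (\<lambda>m. - int (Suc m)))"
    unfolding B_def by (intro has_sum_infsum summable_on_subset_banach[OF f]) auto
  have "(f has_sum (A + B)) UNIV"
    using has_sum_Un_disjoint[OF A B nonneg_int_range_disjoint_neg]
    unfolding UNIV_int_eq_nonneg_Un_neg[symmetric] .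
  then have "S = A + B" using assms has_sum_unique by blast
  moreover have "(\<lambda>n. f (int n)) sums A"
    using A by (subst (asm) has_sum_reindex) (auto simp: o_def intro: has_sum_imp_sums)
  moreover have "(\<lambda>m. f (- int (Suc m))) sums B"
    using B by (subst (asm) has_sum_reindex) (auto simp: o_def inj_def intro: has_sum_imp_sums)
  ultimately show ?thesis using that by blast
qed

lemma has_sum_int_negative_part_sums:
  fixes f :: "int \<Rightarrow> complex"
  assumes "(f has_sum S) UNIV"
    and "\<And>n. f (int n) = a n" and "\<And>m. f (- int (Suc m)) = b m"
  shows "b sums (S - suminf a)"
proof -
  obtain A B where "(\<lambda>n. f (int n)) sums A" "(\<lambda>m. f (- int (Suc m))) sums B" "S = A + B"
    using has_sum_int_imp_sums[OF assms(1)] .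
  with assms(2,3) show ?thesis by (simp add: sums_iff)
qed

lemma summable_on_product_of_abs_summable:
  fixes f :: "'a \<Rightarrow> complex" and g :: "'b \<Rightarrow> complex"
  assumes f: "(\<lambda>x. norm (f x)) summable_on UNIV" and g: "(\<lambda>y. norm (g y)) summable_on UNIV"
  shows "(\<lambda>(x,y). f x * g y) summable_on UNIV"
proof -
  define G where "G = infsum (\<lambda>y. norm (g y)) UNIV"
  have "(\<lambda>(x,y). norm (f x) * norm (g y)) summable_on Sigma UNIV (\<lambda>_. UNIV)"
  proof (rule summable_on_SigmaI[where g = "\<lambda>x. norm (f x) * G"])
    fix x :: 'a
    show "((\<lambda>y. case (x, y) of (x, y) \<Rightarrow> norm (f x) * norm (g y)) has_sum norm (f x) * G) UNIV"
    proof -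
      have "((\<lambda>y. norm (g y)) has_sum G) UNIV" using g by (simp add: G_def)
      from has_sum_cmult_right[OF this, where c="norm (f x)"] show ?thesis by simp
    qed
    show "(\<lambda>x. norm (f x) * G) summable_on UNIV" by (rule summable_on_cmult_left[OF f])
  qed auto
  then have "(\<lambda>z. norm ((\<lambda>(x,y). f x * g y) z)) summable_on UNIV"
    by (simp add: case_prod_beta' norm_mult)
  then show ?thesis by (rule abs_summable_summable)
qed

section \<open>The Jacobi triple product and a bilateral extension\<close>

definition jacobi_term :: "complex \<Rightarrow> complex \<Rightarrow> int \<Rightarrow> complex" where
  "jacobi_term p x n = (-1) powi n * p powi (n * (n - 1) div 2) * x powi n"

lemma int_times_pred_div_2: "int m * (int m - 1) div 2 = int (m choose 2)"
proof -
  have "int (m choose 2) = int (m * (m - 1)) div 2"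
    by (simp add: choose_two zdiv_int)
  also have "int (m * (m - 1)) = int m * (int m - 1)"
    by (cases m) (simp_all add: algebra_simps)
  finally show ?thesis by simp
qed

lemma times_pred_div_2_add:
  fixes a c :: int
  shows "(a + c) * (a + c - 1) div 2 = a * (a - 1) div 2 + c * (c - 1) div 2 + a * c"
proof -
  have "even (a * (a - 1))" "even (c * (c - 1))" by auto
  then obtain u v where u: "a * (a - 1) = 2 * u" and v: "c * (c - 1) = 2 * v"
    by (metis evenE)
  have "(a + c) * (a + c - 1) = 2 * (u + v + a * c)"
    using u v by (simp add: algebra_simps)
  then show ?thesis using u v by simp
qed

lemma jacobi_term_of_nat: "jacobi_term p x (int m) = (-1) ^ m * p ^ (m choose 2) * x ^ m"
  unfolding jacobi_term_def by (simp add: int_times_pred_div_2)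

lemma jacobi_term_neg:
  "jacobi_term p x (- int m) = (-1) ^ m * p ^ (Suc m choose 2) * (1 / x) ^ m"
proof -
  have "- int m * (- int m - 1) div 2 = int (Suc m choose 2)"
    using int_times_pred_div_2[of "Suc m"] by (simp add: algebra_simps)
  moreover have "(-1::complex) powi (- int m) = (-1) ^ m"
    by (cases "even m") (simp_all add: power_int_minus)
  moreover have "x powi (- int m) = (1 / x) ^ m"
    by (simp add: power_int_minus power_one_over inverse_eq_divide)
  ultimately show ?thesis
    unfolding jacobi_term_def by simp
qed

lemma abs_summable_jacobi_term:
  fixes p x :: complex
  assumes p: "norm p < 1" and x: "x \<noteq> 0"
  shows "(\<lambda>n. norm (jacobi_term p x n)) summable_on UNIV"
proof (rule abs_summable_on_int)
  show "summable (\<lambda>n. norm (jacobi_term p x (int n)))"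
  proof (rule summable_norm_ratio_LIMSEQ)
    fix n
    have "(Suc n choose 2) = (n choose 2) + n"
      by (simp add: numeral_2_eq_2)
    then show "norm (jacobi_term p x (int (Suc n))) \<le> (norm p ^ n * norm x) * norm (jacobi_term p x (int n))"
      unfolding jacobi_term_of_nat by (simp add: norm_mult norm_power power_add)
    show "(\<lambda>n. norm p ^ n * norm x) \<longlonglongrightarrow> 0 * norm x"
      using p by (intro tendsto_intros LIMSEQ_power_zero) auto
  qed simp
  show "summable (\<lambda>n. norm (jacobi_term p x (- int (Suc n))))"
  proof (rule summable_norm_ratio_LIMSEQ)
    fix n
    have "(Suc (Suc (Suc n)) choose 2) = (Suc (Suc n) choose 2) + Suc (Suc n)"
      by (simp add: numeral_2_eq_2)
    then show "norm (jacobi_term p x (- int (Suc (Suc n))))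
               \<le> (norm p ^ Suc (Suc n) / norm x) * norm (jacobi_term p x (- int (Suc n)))"
      unfolding jacobi_term_neg using x
      by (simp add: norm_mult norm_power power_add norm_divide field_simps)
    have "(\<lambda>n. norm p ^ 2 * norm p ^ n / norm x) \<longlonglongrightarrow> norm p ^ 2 * 0 / norm x"
      using p x by (intro tendsto_intros LIMSEQ_power_zero) auto
    then show "(\<lambda>n. norm p ^ Suc (Suc n) / norm x) \<longlonglongrightarrow> 0"
      by (simp add: power2_eq_square mult.assoc)
  qed simp
qed

lemma jacobi_term_shift:
  fixes p x b :: complex
  assumes p: "p \<noteq> 0" and x: "x \<noteq> 0"
  shows "jacobi_term p x (n + int k) * ((b / x) ^ k / qpoch p p k)
       = jacobi_term p x n * (euler_coeff p k * (b * p powi n) ^ k)"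
proof -
  have "(n + int k) * (n + int k - 1) div 2 = n * (n - 1) div 2 + int (k choose 2) + n * int k"
    using times_pred_div_2_add[of n "int k"] int_times_pred_div_2[of k] by simp
  then have "p powi ((n + int k) * (n + int k - 1) div 2)
             = p powi (n * (n - 1) div 2) * p ^ (k choose 2) * (p powi n) ^ k"
    using p by (simp add: power_int_add power_int_mult)
  moreover have "(-1::complex) powi (n + int k) = (-1) powi n * (-1) ^ k"
    by (simp add: power_int_add)
  moreover have "x powi (n + int k) = x powi n * x ^ k"
    using x by (simp add: power_int_add)
  ultimately show ?thesis
    unfolding jacobi_term_def euler_coeff_def using x
    by (simp add: power_mult_distrib field_simps)
qed

lemma jacobi_term_qinf_has_sum:
  fixes p x b :: complex
  assumes p: "norm p < 1" "p \<noteq> 0" and x: "x \<noteq> 0" and bx: "norm (b / x) < 1"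
  shows "((\<lambda>n. jacobi_term p x n * qinf (b * p powi n) p)
          has_sum (infsum (jacobi_term p x) UNIV / qinf (b / x) p)) UNIV"
proof -
  define T where "T = infsum (jacobi_term p x) UNIV"
  define E where "E = 1 / qinf (b / x) p"
  define h where "h = (\<lambda>(n::int, k::nat). jacobi_term p x n * ((b / x) ^ k / qpoch p p k))"
  have T: "(jacobi_term p x has_sum T) UNIV"
    unfolding T_def
    by (rule has_sum_infsum, rule abs_summable_summable, rule abs_summable_jacobi_term[OF p(1) x])
  have abs_E: "summable (\<lambda>k. norm ((b / x) ^ k / qpoch p p k))"
    by (rule summable_inverse_qpoch_series[OF p(1) bx])
  have E: "((\<lambda>k. (b / x) ^ k / qpoch p p k) has_sum E) UNIV"
    unfolding E_def by (rule norm_summable_imp_has_sum[OF abs_E inverse_qpoch_series_sums[OF p(1) bx]])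
  have "(\<lambda>k. norm ((b / x) ^ k / qpoch p p k)) summable_on UNIV"
    using norm_summable_imp_summable_on[of "\<lambda>k. norm ((b / x) ^ k / qpoch p p k)"] abs_E by simp
  then have "h summable_on UNIV"
    unfolding h_def
    by (rule summable_on_product_of_abs_summable[OF abs_summable_jacobi_term[OF p(1) x]])
  then have "(h has_sum T * E) (Sigma UNIV (\<lambda>_. UNIV))"
    using has_sum_cmult_right[OF E] has_sum_cmult_left[OF T]
    by (intro has_sum_SigmaI[where g = "\<lambda>n. jacobi_term p x n * E"]) (auto simp: h_def)
  \<comment> \<open>Reindexing along (n, k) \<mapsto> (n + k, k) turns the inner sums into Euler's series for (b p^n; p)_inf.\<close>
  moreover have "bij_betw (\<lambda>(n, k). (n + int k, k)) UNIV UNIV"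
    by (rule bij_betwI[where g = "\<lambda>(n, k). (n - int k, k)"]) auto
  ultimately have "((\<lambda>(n, k). h (n + int k, k)) has_sum T * E) (Sigma UNIV (\<lambda>_. UNIV))"
    using has_sum_reindex_bij_betw[of "\<lambda>(n, k). (n + int k, k)" UNIV UNIV h]
    by (simp add: case_prod_beta')
  moreover have "h (n + int k, k) = jacobi_term p x n * (euler_coeff p k * (b * p powi n) ^ k)" for n k
    unfolding h_def using jacobi_term_shift[OF p(2) x] by simp
  ultimately have shifted: "((\<lambda>(n, k). jacobi_term p x n * (euler_coeff p k * (b * p powi n) ^ k))
                            has_sum T * E) (Sigma UNIV (\<lambda>_. UNIV))"
    by simp
  have "((\<lambda>k. jacobi_term p x n * (euler_coeff p k * (b * p powi n) ^ k))
         has_sum jacobi_term p x n * qinf (b * p powi n) p) UNIV" for n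
    by (rule has_sum_cmult_right, rule norm_summable_imp_has_sum[OF summable_euler_series[OF p(1)]
          euler_series_sums_qinf[OF p(1)]])
  then have "((\<lambda>n. jacobi_term p x n * qinf (b * p powi n) p) has_sum T * E) UNIV"
    by (intro has_sum_SigmaD[OF shifted]) auto
  then show ?thesis by (simp add: T_def E_def)
qed

theorem jacobi_triple_product:
  fixes p x :: complex
  assumes p: "norm p < 1" "p \<noteq> 0" and x: "x \<noteq> 0" and px: "norm (p / x) < 1"
  shows "(jacobi_term p x has_sum (qinf p p * qinf x p * qinf (p / x) p)) UNIV"
proof -
  define T where "T = infsum (jacobi_term p x) UNIV"
  have T: "(jacobi_term p x has_sum T) UNIV"
    unfolding T_def
    by (rule has_sum_infsum, rule abs_summable_summable, rule abs_summable_jacobi_term[OF p(1) x])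
  obtain A B where
    A: "(\<lambda>n. jacobi_term p x (int n) * qinf (p * p powi int n) p) sums A" and
    B: "(\<lambda>m. jacobi_term p x (- int (Suc m)) * qinf (p * p powi (- int (Suc m))) p) sums B" and
    AB: "T / qinf (p / x) p = A + B"
    using has_sum_int_imp_sums[OF jacobi_term_qinf_has_sum[OF p x px]] unfolding T_def by blast
  \<comment> \<open>For negative n the product (p^(n+1); p)_inf contains the factor 1 - p^0.\<close>
  have "qinf (p * p powi (- int (Suc m))) p = 0" for m
  proof (rule qinf_eq_0[OF p(1), where j = m])
    show "p * p powi (- int (Suc m)) * p ^ m = 1"
      unfolding power_int_minus power_int_of_nat using p(2) by (simp add: field_simps)
  qed
  then have "B = 0"
    using B sums_unique by fastforce
  have "jacobi_term p x (int n) * qinf (p * p powi int n) p = qinf p p * (euler_coeff p n * x ^ n)" for n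
    using qinf_split[OF p(1), of p n] qpoch_nonzero[of p p n] p(1)
    unfolding jacobi_term_of_nat euler_coeff_def by (simp add: field_simps)
  then have "A = qinf p p * qinf x p"
    using A sums_unique2 sums_mult[OF euler_series_sums_qinf[OF p(1)], of "qinf p p" x] by simp
  with AB \<open>B = 0\<close> qinf_nonzero[OF p(1) px] have "T = qinf p p * qinf x p * qinf (p / x) p"
    by (simp add: field_simps)
  with T show ?thesis by simp
qed

lemma jacobi_term_div_qpochZ_has_sum:
  fixes p x b :: complex
  assumes p: "norm p < 1" "p \<noteq> 0" and x: "x \<noteq> 0" and px: "norm (p / x) < 1"
    and bx: "norm (b / x) < 1" and b: "qinf b p \<noteq> 0"
  shows "((\<lambda>n. jacobi_term p x n / qpochZ b p n) has_sum
           (qinf p p * qinf x p * qinf (p / x) p / (qinf b p * qinf (b / x) p))) UNIV"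
proof -
  have "infsum (jacobi_term p x) UNIV = qinf p p * qinf x p * qinf (p / x) p"
    using jacobi_triple_product[OF p x px] by (rule infsumI)
  then have "((\<lambda>n. jacobi_term p x n * qinf (b * p powi n) p) has_sum
              (qinf p p * qinf x p * qinf (p / x) p / qinf (b / x) p)) UNIV"
    using jacobi_term_qinf_has_sum[OF p x bx] by simp
  from has_sum_cmult_right[OF this, of "1 / qinf b p"] show ?thesis
    unfolding qinf_mult_power_int[OF p b] using b by simp
qed

section \<open>Cesaro summation\<close>

lemma cesaro_mean_null:
  fixes D :: "nat \<Rightarrow> complex"
  assumes D: "D \<longlonglongrightarrow> 0"
  shows "(\<lambda>N. (\<Sum>n<N. D n) / of_nat (Suc N)) \<longlonglongrightarrow> 0"
proof (rule LIMSEQ_I)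
  fix r :: real assume r: "r > 0"
  then obtain N0 where N0: "\<And>n. n \<ge> N0 \<Longrightarrow> norm (D n) < r / 2"
    using LIMSEQ_D[OF D, of "r / 2"] by auto
  define C where "C = (\<Sum>n<N0. norm (D n))"
  obtain N1 :: nat where N1: "real N1 > 2 * C / r"
    using reals_Archimedean2 by blast
  show "\<exists>no. \<forall>N\<ge>no. norm ((\<Sum>n<N. D n) / of_nat (Suc N) - 0) < r"
  proof (intro exI allI impI)
    fix N assume N: "N \<ge> max N0 N1"
    have "norm (\<Sum>n<N. D n) \<le> (\<Sum>n<N. norm (D n))"
      by (rule norm_sum)
    also have "\<dots> = C + (\<Sum>n\<in>{N0..<N}. norm (D n))"
    proof -
      have split: "{..<N} = {..<N0} \<union> {N0..<N}" using N by auto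
      show ?thesis unfolding C_def split by (subst sum.union_disjoint) auto
    qed
    also have "(\<Sum>n\<in>{N0..<N}. norm (D n)) \<le> (\<Sum>n\<in>{N0..<N}. r / 2)"
      using N0 by (intro sum_mono) (auto intro: less_imp_le)
    also have "\<dots> \<le> real N * (r / 2)"
      using r by simp
    also have "C < real (Suc N) * (r / 2)"
    proof -
      have "2 * C / r < real N" using N1 N by linarith
      then show ?thesis using r by (simp add: field_simps)
    qed
    finally have "norm (\<Sum>n<N. D n) < r * real (Suc N)"
      using r by (simp add: field_simps)
    then show "norm ((\<Sum>n<N. D n) / of_nat (Suc N) - 0) < r"
      by (simp add: norm_divide divide_less_eq del: of_nat_Suc)
  qed
qed

lemma cesaro_mean_LIMSEQ:
  fixes V :: "nat \<Rightarrow> complex"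
  assumes "V \<longlonglongrightarrow> L"
  shows "(\<lambda>N. (\<Sum>n<N. V n) / of_nat (Suc N)) \<longlonglongrightarrow> L"
proof -
  have "(\<lambda>N. (\<Sum>n<N. V n - L) / of_nat (Suc N)) \<longlonglongrightarrow> 0"
    using assms by (intro cesaro_mean_null) (simp add: LIM_zero)
  moreover have "(\<lambda>N. 1 / of_nat (Suc N) :: complex) \<longlonglongrightarrow> 0"
    using LIMSEQ_Suc[OF lim_const_over_n[of 1]] by simp
  ultimately have "(\<lambda>N. (\<Sum>n<N. V n - L) / of_nat (Suc N) + L * (1 - 1 / of_nat (Suc N)))
                   \<longlonglongrightarrow> 0 + L * (1 - 0)"
    by (intro tendsto_add tendsto_mult tendsto_diff tendsto_const)
  moreover have "(\<Sum>n<N. V n - L) / of_nat (Suc N) + L * (1 - 1 / of_nat (Suc N))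
                 = (\<Sum>n<N. V n) / of_nat (Suc N)" for N
    by (simp add: sum_subtractf field_simps del: of_nat_Suc) (simp add: algebra_simps)
  ultimately show ?thesis by simp
qed

lemma cesaro_sums_half_limit:
  fixes f :: "nat \<Rightarrow> complex"
  assumes lim: "(\<lambda>n. (\<Sum>k\<le>n. f k) + (\<Sum>k\<le>Suc n. f k)) \<longlonglongrightarrow> L" and bounded: "Bseq f"
  shows "cesaro_sums f (L / 2)"
proof -
  define S where "S = (\<lambda>n. \<Sum>k\<le>n. f k)"
  define V where "V = (\<lambda>n. S n + S (Suc n))"
  obtain K1 where K1: "\<And>n. norm (V n) \<le> K1"
    using convergent_imp_Bseq[OF convergentI[OF lim]] unfolding V_def S_def Bseq_def by auto
  obtain K2 where K2: "\<And>n. norm (f n) \<le> K2"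
    using bounded by (auto simp: Bseq_def)
  have S_bound: "norm (S n) \<le> (K1 + K2) / 2" for n
  proof -
    have "2 * S n = V n - f (Suc n)" by (simp add: V_def S_def)
    then have "norm (2 * S n) \<le> K1 + K2"
      using norm_triangle_ineq4[of "V n" "f (Suc n)"] K1[of n] K2[of "Suc n"] by simp
    then show ?thesis by (simp add: norm_mult)
  qed
  have "(\<lambda>N. (S 0 + S N) / of_nat (Suc N)) \<longlonglongrightarrow> 0"
  proof (rule Lim_null_comparison)
    show "\<forall>\<^sub>F N in sequentially. norm ((S 0 + S N) / of_nat (Suc N)) \<le> (K1 + K2) * (1 / real (Suc N))"
    proof (intro always_eventually allI)
      fix N
      have "norm (S 0 + S N) \<le> K1 + K2"
        using S_bound[of 0] S_bound[of N] norm_triangle_ineq[of "S 0" "S N"] by argo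
      then show "norm ((S 0 + S N) / of_nat (Suc N)) \<le> (K1 + K2) * (1 / real (Suc N))"
        by (simp add: norm_divide divide_right_mono del: of_nat_Suc)
    qed
    show "(\<lambda>N. (K1 + K2) * (1 / real (Suc N))) \<longlonglongrightarrow> 0"
      using tendsto_mult_right_zero[OF LIMSEQ_Suc[OF lim_const_over_n[of 1]]] by simp
  qed
  then have "(\<lambda>N. ((S 0 + S N) / of_nat (Suc N) + (\<Sum>n<N. V n) / of_nat (Suc N)) / 2) \<longlonglongrightarrow> (0 + L) / 2"
    using lim unfolding V_def S_def by (intro tendsto_intros cesaro_mean_LIMSEQ) simp_all
  moreover have mean_eq: "((S 0 + S N) / of_nat (Suc N) + (\<Sum>n<N. V n) / of_nat (Suc N)) / 2
                 = (\<Sum>n\<le>N. S n) / of_nat (Suc N)" for N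
  proof -
    have "2 * (\<Sum>n\<le>N. S n) = S 0 + S N + (\<Sum>n<N. V n)"
      unfolding V_def by (induction N) (simp_all add: algebra_simps)
    then have "(\<Sum>n\<le>N. S n) = (S 0 + S N + (\<Sum>n<N. V n)) / 2"
      by (simp add: eq_divide_eq mult.commute)
    then show ?thesis by (simp add: add_divide_distrib mult.commute)
  qed
  ultimately have "(\<lambda>N. (\<Sum>n\<le>N. S n) / of_nat (Suc N)) \<longlonglongrightarrow> L / 2"
    by (simp only: mean_eq add_0_left)
  then show ?thesis
    unfolding cesaro_sums_def S_def .
qed

section \<open>Specialisations to the third order mock theta functions\<close>

lemma jacobi_term_square_base:
  fixes q x :: complex
  assumes "q \<noteq> 0"
  shows "jacobi_term (q^2) x n = (-1) powi n * q powi (n * (n - 1)) * x powi n"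
proof -
  have "even (n * (n - 1))" by auto
  then have "q powi (n * (n - 1)) = (q^2) powi (n * (n - 1) div 2)"
    by (metis dvd_mult_div_cancel power_int_mult power_int_of_nat of_nat_numeral)
  then show ?thesis unfolding jacobi_term_def by simp
qed

lemma power_int_neg_square: "(q::complex) powi ((- int m)^2) = q ^ (m * m)"
  by (simp add: power2_eq_square flip: power_int_of_nat)

lemma power_int_of_nat_square: "(q::complex) powi ((int n)^2) = q ^ (n^2)"
  by (simp flip: power_int_of_nat)

lemma phi_bilateral_has_sum:
  fixes q :: complex
  assumes q: "norm q < 1" "q \<noteq> 0"
  shows "((\<lambda>n::int. q powi (n^2) / qpochZ (-(q^2)) (q^2) n) has_sum
          (qinf (-q) (q^2) * qinf (-q) (q^2) * qinf (q^2) (q^2)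
            / (qinf q (q^2) * qinf (-(q^2)) (q^2)))) UNIV"
proof -
  have p: "norm (q^2) < 1" "q^2 \<noteq> 0" using q norm_power_less_one[of q 2] by auto
  have "jacobi_term (q^2) (-q) n = q powi (n^2)" for n
  proof -
    have "(-q) powi n = (-1) powi n * q powi n"
      by (simp add: power_int_mult_distrib[symmetric])
    then have "jacobi_term (q^2) (-q) n = ((-1) * (-1)) powi n * (q powi (n * (n - 1)) * q powi n)"
      unfolding jacobi_term_square_base[OF q(2)] by (simp add: power_int_mult_distrib mult_ac)
    also have "q powi (n * (n - 1)) * q powi n = q powi (n^2)"
      using q(2) by (simp add: power2_eq_square algebra_simps flip: power_int_add)
    finally show ?thesis by simp
  qed
  moreover have "q^2 / (-q) = -q" "-(q^2) / (-q) = q"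
    using q by (simp_all add: power2_eq_square)
  ultimately show ?thesis
    using jacobi_term_div_qpochZ_has_sum[OF p, of "-q" "-(q^2)"] qinf_nonzero[OF p(1), of "-(q^2)"] q p
    by (simp add: mult_ac)
qed

lemma phi_negative_term:
  fixes q :: complex
  assumes q: "q \<noteq> 0"
  shows "q powi ((- int m)^2) / qpochZ (-(q^2)) (q^2) (- int m) = qpoch (-1) (q^2) m * q ^ m"
proof -
  have "q powi ((- int m)^2) / qpochZ (-(q^2)) (q^2) (- int m)
        = q ^ (m * m) * (1 / qpochZ (-(q^2)) (q^2) (- int m))"
    unfolding power_int_neg_square by simp
  also have "\<dots> = q ^ (m * m) * ((q^2) ^ m * qpoch (-1) (q^2) m / q ^ (m * m + m))"
    using inverse_qpochZ_neg_square_base[OF q, of "-(q^2)" m] q by simp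
  also have "\<dots> = qpoch (-1) (q^2) m * q ^ m"
    using q by (simp add: power_add power2_eq_square field_simps flip: power_mult_distrib)
  finally show ?thesis .
qed

lemma phi_tail_sums:
  fixes q :: complex
  assumes q: "norm q < 1"
  shows "(\<lambda>r. qpoch (-1) (q^2) (Suc r) * q ^ (Suc r)) sums
          (qinf (-q) (q^2) * qinf (-q) (q^2) * qinf (q^2) (q^2)
            / (qinf q (q^2) * qinf (-(q^2)) (q^2)) - mock_phi q)"
proof (cases "q = 0")
  case True
  have "(\<lambda>n. (0::complex) ^ (n^2) / qpoch (- (0^2)) (0^2) n) = (\<lambda>n. if n = 0 then 1 else 0)"
    by auto
  then have "mock_phi 0 = 1"
    using sums_single[of 0 "\<lambda>_. 1::complex"] by (simp add: mock_phi_def sums_iff)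
  then show ?thesis
    using True by simp
next
  case False
  show ?thesis
    unfolding mock_phi_def
  proof (rule has_sum_int_negative_part_sums[OF phi_bilateral_has_sum[OF q False]])
    show "q powi ((int n)^2) / qpochZ (-(q^2)) (q^2) (int n) = q ^ (n^2) / qpoch (-(q^2)) (q^2) n" for n
      by (simp add: power_int_of_nat_square)
  qed (rule phi_negative_term[OF False])
qed

lemma nu_bilateral_has_sum:
  fixes q :: complex
  assumes q: "norm q < 1" "q \<noteq> 0"
  shows "((\<lambda>n::int. q powi (n^2 + n) / qpochZ (-q) (q^2) (n + 1)) has_sum
          (2 * qinf (-(q^2)) (q^2) * qinf (-(q^2)) (q^2) * qinf (q^4) (q^4))) UNIV"
proof -
  have p: "norm (q^2) < 1" "q^2 \<noteq> 0" using q norm_power_less_one[of q 2] by auto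
  have nonzero: "qinf (-q) (q^2) \<noteq> 0" "qinf q (q^2) \<noteq> 0"
    using qinf_nonzero[OF p(1)] q by auto
  have "jacobi_term (q^2) (-1) n = ((-1) * (-1)) powi n * q powi (n * (n - 1))" for n
    unfolding jacobi_term_square_base[OF q(2)] by (simp add: power_int_mult_distrib mult_ac)
  then have term_eq: "jacobi_term (q^2) (-1) n = q powi (n * (n - 1))" for n
    by simp
  have "qinf (-1) (q^2) = 2 * qinf (-(q^2)) (q^2)"
    using qinf_split_first[OF p(1), of "-1"] by simp
  then have value_eq: "qinf (q^2) (q^2) * qinf (-1) (q^2) * qinf (-(q^2)) (q^2) / (qinf (-q) (q^2) * qinf q (q^2))
         = 2 * qinf (-(q^2)) (q^2) * qinf (-(q^2)) (q^2) * qinf (q^4) (q^4)"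
    using nonzero unfolding qinf_square_base_split[OF q(1)] by (simp add: field_simps)
  have "((\<lambda>n. jacobi_term (q^2) (-1) n / qpochZ (-q) (q^2) n) has_sum
          (qinf (q^2) (q^2) * qinf (-1) (q^2) * qinf (-(q^2)) (q^2) / (qinf (-q) (q^2) * qinf q (q^2)))) UNIV"
    using jacobi_term_div_qpochZ_has_sum[OF p, of "-1" "-q"] nonzero q p by simp
  then have "((\<lambda>n. q powi (n * (n - 1)) / qpochZ (-q) (q^2) n) has_sum
          (2 * qinf (-(q^2)) (q^2) * qinf (-(q^2)) (q^2) * qinf (q^4) (q^4))) UNIV"
    unfolding term_eq value_eq .
  moreover have "bij_betw (\<lambda>n::int. n + 1) UNIV UNIV"
    by (rule bij_betwI[where g = "\<lambda>n. n - 1"]) auto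
  moreover have "(n + 1) * n = n^2 + n" for n :: int
    by (simp add: power2_eq_square algebra_simps)
  ultimately show ?thesis
    using has_sum_reindex_bij_betw[of "\<lambda>n::int. n + 1" UNIV UNIV
        "\<lambda>n. q powi (n * (n - 1)) / qpochZ (-q) (q^2) n"] by simp
qed

lemma nu_negative_term:
  fixes q :: complex
  assumes q: "q \<noteq> 0"
  shows "q powi ((- int (Suc m))^2 + (- int (Suc m))) / qpochZ (-q) (q^2) (- int (Suc m) + 1)
         = qpoch (-q) (q^2) m * q ^ m"
proof -
  have "(- int (Suc m))^2 + (- int (Suc m)) = int (m * m + m)"
    by (simp add: power2_eq_square algebra_simps)
  moreover have "- int (Suc m) + 1 = - int m" by simp
  ultimately have "q powi ((- int (Suc m))^2 + (- int (Suc m))) / qpochZ (-q) (q^2) (- int (Suc m) + 1)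
                   = q ^ (m * m + m) * (1 / qpochZ (-q) (q^2) (- int m))"
    by (simp only: power_int_of_nat) simp
  also have "1 / qpochZ (-q) (q^2) (- int m) = q ^ m * qpoch (-q) (q^2) m / q ^ (m * m + m)"
    using inverse_qpochZ_neg_square_base[OF q, of "-q" m] q by (simp add: power2_eq_square)
  finally show ?thesis
    using q by simp
qed

lemma nu_tail_sums:
  fixes q :: complex
  assumes q: "norm q < 1"
  shows "(\<lambda>r. qpoch (-q) (q^2) r * q ^ r) sums
          (2 * qinf (-(q^2)) (q^2) * qinf (-(q^2)) (q^2) * qinf (q^4) (q^4) - mock_nu q)"
proof (cases "q = 0")
  case True
  have "(\<lambda>n. (0::complex) ^ (n^2 + n) / qpoch (- 0) (0^2) (Suc n)) = (\<lambda>n. if n = 0 then 1 else 0)"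
    "(\<lambda>r. qpoch (-0) ((0::complex)^2) r * 0 ^ r) = (\<lambda>n. if n = 0 then 1 else 0)"
    by auto
  then show ?thesis
    using True sums_single[of 0 "\<lambda>_. 1::complex"] by (simp add: mock_nu_def sums_iff)
next
  case False
  show ?thesis
    unfolding mock_nu_def
  proof (rule has_sum_int_negative_part_sums[OF nu_bilateral_has_sum[OF q False]])
    show "q powi ((int n)^2 + int n) / qpochZ (-q) (q^2) (int n + 1) = q ^ (n^2 + n) / qpoch (-q) (q^2) (Suc n)" for n
    proof -
      have "(int n)^2 + int n = int (n^2 + n)" "int n + 1 = int (Suc n)" by simp_all
      then show ?thesis by (simp only: power_int_of_nat qpochZ_of_nat)
    qed
  qed (rule nu_negative_term[OF False])
qed

lemma psi_bilateral_has_sum: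
  fixes q :: complex
  assumes q: "norm q < 1" "q \<noteq> 0"
  shows "((\<lambda>n. jacobi_term (q^2) (- 1 / q) n / qpochZ q (q^2) n) has_sum
          (qinf (-q) (q^2) * qinf (-q) (q^2) * qinf (q^2) (q^2)
            / (qinf q (q^2) * qinf (-(q^2)) (q^2))) / q) UNIV"
proof -
  define x where "x = - 1 / q"
  have p: "norm (q^2) < 1" "q^2 \<noteq> 0" using q norm_power_less_one[of q 2] by auto
  have x: "x \<noteq> 0" "q / x = - (q^2)" "q^2 / x = - (q^3)"
    using q(2) by (simp_all add: x_def power2_eq_square power3_eq_cube)
  have nonzero: "qinf q (q^2) \<noteq> 0" "qinf (-(q^2)) (q^2) \<noteq> 0"
    using qinf_nonzero[OF p(1)] q p by auto
  have "norm (-(q^3)) < 1"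
    using norm_power_less_one[OF q(1), of 3] by simp
  then have "((\<lambda>n. jacobi_term (q^2) x n / qpochZ q (q^2) n) has_sum
          qinf (q^2) (q^2) * qinf x (q^2) * qinf (-(q^3)) (q^2) / (qinf q (q^2) * qinf (-(q^2)) (q^2))) UNIV"
    using jacobi_term_div_qpochZ_has_sum[OF p x(1), of q] x p nonzero by simp
  moreover have "qinf (q^2) (q^2) * qinf x (q^2) * qinf (-(q^3)) (q^2) / (qinf q (q^2) * qinf (-(q^2)) (q^2))
                 = qinf (-q) (q^2) * qinf (-q) (q^2) * qinf (q^2) (q^2)
                   / (qinf q (q^2) * qinf (-(q^2)) (q^2)) / q"
  proof -
    have "qinf x (q^2) = (1 + 1 / q) * qinf (-q) (q^2)"
      using qinf_split_first[OF p(1), of x] q(2) by (simp add: x_def power2_eq_square)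
    moreover have "qinf (-q) (q^2) = (1 + q) * qinf (-(q^3)) (q^2)"
      using qinf_split_first[OF p(1), of "-q"] by (simp add: power2_eq_square power3_eq_cube mult.assoc)
    ultimately have "q * qinf x (q^2) * qinf (-(q^3)) (q^2) = qinf (-q) (q^2) * qinf (-q) (q^2)"
      using q(2) by (simp add: field_simps)
    then show ?thesis
      using q(2) nonzero by (simp add: field_simps)
  qed
  ultimately show ?thesis
    unfolding x_def by simp
qed

lemma psi_positive_term:
  fixes q :: complex
  assumes q: "norm q < 1" "q \<noteq> 0"
  shows "q * (jacobi_term (q^2) (- 1 / q) (int (Suc n)) / qpochZ q (q^2) (int (Suc n)))
         = q ^ (n^2) / qpoch q (q^2) n + q ^ (Suc n ^ 2) / qpoch q (q^2) (Suc n)"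
proof -
  have nonzero: "qpoch q (q^2) n \<noteq> 0" "1 - q ^ Suc (2 * n) \<noteq> 0"
    using qpoch_nonzero[of q "q^2" n] one_minus_power_Suc_nonzero[OF q(1), of "2 * n"] q
    by (auto simp: norm_power power_le_one)
  have "(-1) ^ Suc n * (- 1 / q) ^ Suc n = (1 / q) ^ Suc n"
    by (simp flip: power_mult_distrib)
  then have "q * (jacobi_term (q^2) (- 1 / q) (int (Suc n)) / qpochZ q (q^2) (int (Suc n)))
             = q ^ (n * n) / qpoch q (q^2) (Suc n)"
    unfolding jacobi_term_of_nat qpochZ_of_nat power2_power_Suc_choose_2 using q(2)
    by (simp add: power_add field_simps)
  also have "\<dots> = q ^ (n^2) / qpoch q (q^2) n + q ^ (Suc n ^ 2) / qpoch q (q^2) (Suc n)"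
  proof -
    have "Suc n ^ 2 = n^2 + Suc (2 * n)" by (simp add: power2_eq_square)
    then show ?thesis
      using nonzero unfolding qpoch_Suc by (simp add: power_add power_mult field_simps power2_eq_square)
  qed
  finally show ?thesis .
qed

lemma psi_negative_term:
  fixes q :: complex
  assumes q: "q \<noteq> 0"
  shows "q * (jacobi_term (q^2) (- 1 / q) (- int (Suc m)) / qpochZ q (q^2) (- int (Suc m)))
         = qpoch q (q^2) (Suc m) * (-1) ^ Suc m + qpoch q (q^2) (Suc (Suc m)) * (-1) ^ Suc (Suc m)"
proof -
  define k where "k = Suc m"
  have "jacobi_term (q^2) (- 1 / q) (- int k) / qpochZ q (q^2) (- int k)
        = (-1) ^ k * q ^ (k * k + k) * (-q) ^ k * (1 / qpochZ q (q^2) (- int k))"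
    unfolding jacobi_term_neg power2_power_Suc_choose_2 using q by simp
  also have "1 / qpochZ q (q^2) (- int k) = (-q) ^ k * qpoch q (q^2) k / q ^ (k * k + k)"
    using inverse_qpochZ_neg_square_base[OF q q, of k] q by (simp add: power2_eq_square)
  also have "(-1) ^ k * q ^ (k * k + k) * (-q) ^ k * ((-q) ^ k * qpoch q (q^2) k / q ^ (k * k + k))
             = (-1) ^ k * ((-q) ^ k * (-q) ^ k) * qpoch q (q^2) k"
    using q by simp
  also have "(-q) ^ k * (-q) ^ k = (q^2) ^ k"
    by (simp add: power2_eq_square flip: power_mult_distrib)
  finally have "jacobi_term (q^2) (- 1 / q) (- int k) / qpochZ q (q^2) (- int k)
                = (-1) ^ k * (q^2) ^ k * qpoch q (q^2) k" .
  moreover have "qpoch q (q^2) k * (-1) ^ k + qpoch q (q^2) (Suc k) * (-1) ^ Suc k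
                 = q * ((-1) ^ k * (q^2) ^ k * qpoch q (q^2) k)"
    by (simp add: qpoch_Suc[of q "q^2" k] algebra_simps)
  ultimately show ?thesis
    unfolding k_def by simp
qed

lemma summable_psi_series:
  fixes q :: complex
  assumes q: "norm q < 1"
  shows "summable (\<lambda>n. q ^ (n^2) / qpoch q (q^2) n)"
proof (rule summable_norm_cancel, rule summable_norm_ratio_LIMSEQ)
  fix n
  have bound: "norm (1 - q ^ Suc (2 * n)) \<ge> 1 - norm q" "1 - norm q > 0"
    using norm_one_minus_power_Suc_ge[OF q, of "2 * n"] q by auto
  have "Suc n ^ 2 = n^2 + Suc (2 * n)" by (simp add: power2_eq_square)
  then have "norm (q ^ (Suc n ^ 2) / qpoch q (q^2) (Suc n))
             = norm (q ^ (n^2) / qpoch q (q^2) n) * norm q ^ Suc (2 * n) / norm (1 - q ^ Suc (2 * n))"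
    unfolding qpoch_Suc by (simp add: power_add power_mult norm_mult norm_divide norm_power)
  also have "\<dots> \<le> norm (q ^ (n^2) / qpoch q (q^2) n) * norm q ^ Suc (2 * n) / (1 - norm q)"
    using bound by (intro divide_left_mono mult_pos_pos) auto
  finally show "norm (q ^ (Suc n ^ 2) / qpoch q (q^2) (Suc n))
                \<le> (norm q ^ Suc (2 * n) / (1 - norm q)) * norm (q ^ (n^2) / qpoch q (q^2) n)"
    by (simp add: mult_ac)
next
  have "(\<lambda>n. norm q * (norm q ^ 2) ^ n / (1 - norm q)) \<longlonglongrightarrow> norm q * 0 / (1 - norm q)"
    using q by (intro tendsto_intros LIMSEQ_power_zero) (auto simp: power_less_one_iff)
  then show "(\<lambda>n. norm q ^ Suc (2 * n) / (1 - norm q)) \<longlonglongrightarrow> 0"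
    by (simp add: power_mult)
qed simp

lemma psi_partial_sums_pair_LIMSEQ:
  fixes q :: complex
  assumes q: "norm q < 1" "q \<noteq> 0"
  defines "S \<equiv> \<lambda>N. \<Sum>k\<le>N. qpoch q (q^2) k * (-1) ^ k"
  shows "(\<lambda>N. S N + S (Suc N)) \<longlonglongrightarrow>
           qinf (-q) (q^2) * qinf (-q) (q^2) * qinf (q^2) (q^2) / (qinf q (q^2) * qinf (-(q^2)) (q^2))
           - 2 * (\<Sum>n. q ^ (n^2) / qpoch q (q^2) n) + 2"
proof -
  define P where "P = qinf (-q) (q^2) * qinf (-q) (q^2) * qinf (q^2) (q^2) / (qinf q (q^2) * qinf (-(q^2)) (q^2))"
  define w where "w = (\<lambda>n. jacobi_term (q^2) (- 1 / q) n / qpochZ q (q^2) n)"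
  define a where "a = (\<lambda>n. q ^ (n^2) / qpoch q (q^2) n)"
  define A where "A = suminf a"
  obtain W_pos W_neg where pos: "(\<lambda>n. w (int n)) sums W_pos" and neg: "(\<lambda>m. w (- int (Suc m))) sums W_neg"
    and P: "P / q = W_pos + W_neg"
    using has_sum_int_imp_sums[OF psi_bilateral_has_sum[OF q]] unfolding P_def w_def by blast
  have a: "a sums A"
    unfolding A_def a_def using summable_psi_series[OF q(1)] by (rule summable_sums)
  have "(\<lambda>n. q * w (int (Suc n))) sums (q * W_pos - q)"
    using sums_mult[OF pos, of q] by (subst sums_Suc_iff) (simp add: w_def jacobi_term_def qpochZ_def)
  moreover have "(\<lambda>n. q * w (int (Suc n))) sums (A + (A - 1))"
    unfolding w_def psi_positive_term[OF q]
    using a sums_Suc_iff[of a "A - 1"] by (intro sums_add) (simp_all add: a_def)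
  ultimately have pos_value: "q * W_pos = 2 * A - 1 + q"
    using sums_unique2 by fastforce
  have "(\<Sum>m<N. q * w (- int (Suc m))) = S N + S (Suc N) - 1 - q" for N
    unfolding w_def psi_negative_term[OF q(2)] S_def
    by (induction N) (simp_all add: qpoch_Suc)
  then have "(\<lambda>N. S N + S (Suc N) - 1 - q) \<longlonglongrightarrow> q * W_neg"
    using sums_mult[OF neg, of q] unfolding sums_def by simp
  then have "(\<lambda>N. S N + S (Suc N) - 1 - q + (1 + q)) \<longlonglongrightarrow> q * W_neg + (1 + q)"
    by (intro tendsto_add tendsto_const)
  moreover have "q * W_neg + (1 + q) = P - 2 * A + 2"
    using P pos_value q(2) by (simp add: field_simps)
  ultimately show ?thesis
    unfolding P_def A_def a_def by simp
qed

lemma psi_negative_index_term: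
  fixes q :: complex
  assumes q: "q \<noteq> 0"
  shows "q powi ((- int m)^2) / qpochZ q (q^2) (- int m) = qpoch q (q^2) m * (-1) ^ m"
proof -
  have "q powi ((- int m)^2) / qpochZ q (q^2) (- int m) = q ^ (m * m) * (1 / qpochZ q (q^2) (- int m))"
    unfolding power_int_neg_square by simp
  also have "1 / qpochZ q (q^2) (- int m) = (-1) ^ m * q ^ m * qpoch q (q^2) m / (q ^ (m * m) * q ^ m)"
    using inverse_qpochZ_neg_square_base[OF q q, of m] q
    by (simp add: power2_eq_square power_add flip: power_mult_distrib)
  finally show ?thesis
    using q by simp
qed

lemma Bseq_qpoch_alternating:
  fixes q :: complex
  assumes "norm q < 1"
  shows "Bseq (\<lambda>k. qpoch q (q^2) k * (-1) ^ k)"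
proof -
  have "norm (q^2) < 1"
    using norm_power_less_one[OF assms, of 2] by simp
  then have "Bseq (\<lambda>n. qpoch q (q^2) n)"
    by (rule convergent_imp_Bseq[OF convergentI[OF qpoch_LIMSEQ_qinf]])
  then obtain K where "\<And>n. norm (qpoch q (q^2) n) \<le> K"
    by (auto simp: Bseq_def)
  then show ?thesis
    by (intro BseqI'[where K = K]) (simp add: norm_mult norm_power)
qed

lemma psi_cesaro_sums:
  fixes q :: complex
  assumes q: "norm q < 1"
  shows "cesaro_sums (\<lambda>r. qpoch q (q^2) r * (-1) ^ r)
          (qinf (-q) (q^2) * qinf (-q) (q^2) * qinf (q^2) (q^2)
            / (2 * (qinf q (q^2) * qinf (-(q^2)) (q^2))) - mock_psi q)"
proof (cases "q = 0")
  case True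
  have "(\<Sum>k\<le>n. (-1::complex) ^ k) = (1 + (-1) ^ n) / 2" for n
    by (induction n) (simp_all add: field_simps)
  then have "(\<lambda>n. (\<Sum>k\<le>n. (-1::complex) ^ k) + (\<Sum>k\<le>Suc n. (-1) ^ k)) \<longlonglongrightarrow> 1"
    by (simp add: field_simps)
  from cesaro_sums_half_limit[OF this] have "cesaro_sums (\<lambda>k. (-1) ^ k) (1 / 2)"
    using Bseq_qpoch_alternating[of 0] by simp
  moreover have "mock_psi 0 = 0"
    by (simp add: mock_psi_def power2_eq_square)
  ultimately show ?thesis
    using True by simp
next
  case False
  define A where "A = (\<Sum>n. q ^ (n^2) / qpoch q (q^2) n)"
  define P where "P = qinf (-q) (q^2) * qinf (-q) (q^2) * qinf (q^2) (q^2) / (qinf q (q^2) * qinf (-(q^2)) (q^2))"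
  have "(\<lambda>n. q ^ (Suc n ^ 2) / qpoch q (q^2) (Suc n)) sums (A - 1)"
    unfolding A_def using summable_psi_series[OF q] by (subst sums_Suc_iff) (simp add: summable_sums)
  then have "A = mock_psi q + 1"
    unfolding mock_psi_def by (simp add: sums_iff)
  then have value_eq: "(P - 2 * A + 2) / 2 = qinf (-q) (q^2) * qinf (-q) (q^2) * qinf (q^2) (q^2)
                          / (2 * (qinf q (q^2) * qinf (-(q^2)) (q^2))) - mock_psi q"
    unfolding P_def by (simp add: diff_divide_distrib add_divide_distrib)
  have "cesaro_sums (\<lambda>r. qpoch q (q^2) r * (-1) ^ r) ((P - 2 * A + 2) / 2)"
    unfolding P_def A_def
    by (rule cesaro_sums_half_limit[OF psi_partial_sums_pair_LIMSEQ[OF q False] Bseq_qpoch_alternating[OF q]])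
  then show ?thesis
    unfolding value_eq .
qed

lemma psi_bilateral_cesaro_sums:
  fixes q :: complex
  assumes q: "norm q < 1" "q \<noteq> 0"
  shows "\<exists>A B. (\<lambda>n. q powi ((int n)^2) / qpochZ q (q^2) (int n)) sums A
           \<and> cesaro_sums (\<lambda>m. q powi ((- int (Suc m))^2) / qpochZ q (q^2) (- int (Suc m))) B
           \<and> A + B = qinf (-q) (q^2) * qinf (-q) (q^2) * qinf (q^2) (q^2)
                      / (2 * (qinf q (q^2) * qinf (-(q^2)) (q^2)))"
proof (intro exI conjI)
  define P where "P = qinf (-q) (q^2) * qinf (-q) (q^2) * qinf (q^2) (q^2) / (qinf q (q^2) * qinf (-(q^2)) (q^2))"
  define A where "A = (\<Sum>n. q ^ (n^2) / qpoch q (q^2) n)"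
  define g where "g = (\<lambda>m. q powi ((- int (Suc m))^2) / qpochZ q (q^2) (- int (Suc m)))"
  define S where "S = (\<lambda>N. \<Sum>k\<le>N. qpoch q (q^2) k * (-1) ^ k)"
  show "(\<lambda>n. q powi ((int n)^2) / qpochZ q (q^2) (int n)) sums A"
    unfolding A_def power_int_of_nat_square qpochZ_of_nat
    using summable_psi_series[OF q(1)] by (rule summable_sums)
  have partial: "(\<Sum>k\<le>n. g k) = S (Suc n) - 1" for n
    unfolding g_def psi_negative_index_term[OF q(2)] S_def sum.atMost_Suc_shift[of _ n] by simp
  have "(\<lambda>n. S (Suc n) + S (Suc (Suc n)) - 2) \<longlonglongrightarrow> P - 2 * A + 2 - 2"
    using LIMSEQ_Suc[OF psi_partial_sums_pair_LIMSEQ[OF q]] unfolding S_def P_def A_def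
    by (intro tendsto_diff tendsto_const)
  then have "(\<lambda>n. (\<Sum>k\<le>n. g k) + (\<Sum>k\<le>Suc n. g k)) \<longlonglongrightarrow> P - 2 * A"
    unfolding partial by (simp add: algebra_simps)
  moreover have "Bseq g"
    unfolding g_def psi_negative_index_term[OF q(2)]
    using Bseq_ignore_initial_segment[OF Bseq_qpoch_alternating[OF q(1)], of 1] by simp
  ultimately have "cesaro_sums g ((P - 2 * A) / 2)"
    by (rule cesaro_sums_half_limit)
  moreover have "(P - 2 * A) / 2 = qinf (-q) (q^2) * qinf (-q) (q^2) * qinf (q^2) (q^2)
                   / (2 * (qinf q (q^2) * qinf (-(q^2)) (q^2))) - A"
    unfolding P_def by (simp add: field_simps)
  ultimately show "cesaro_sums g (qinf (-q) (q^2) * qinf (-q) (q^2) * qinf (q^2) (q^2)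
                   / (2 * (qinf q (q^2) * qinf (-(q^2)) (q^2))) - A)"
    by simp
qed simp

theorem mainTheorem4:
  fixes q :: complex
  assumes "norm q < 1"
  shows
    "((\<lambda>r. qpoch (-1) (q^2) (Suc r) * q ^ (Suc r)) sums
        (qinf (-q) (q^2) * qinf (-q) (q^2) * qinf (q^2) (q^2)
           / (qinf q (q^2) * qinf (-(q^2)) (q^2)) - mock_phi q))
     \<and> (q \<noteq> 0 \<longrightarrow>
        ((\<lambda>n::int. q powi (n^2) / qpochZ (-(q^2)) (q^2) n) has_sum
          (qinf (-q) (q^2) * qinf (-q) (q^2) * qinf (q^2) (q^2)
             / (qinf q (q^2) * qinf (-(q^2)) (q^2)))) UNIV)
     \<and> ((\<lambda>r. qpoch (-q) (q^2) r * q ^ r) sums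
        (2 * qinf (-(q^2)) (q^2) * qinf (-(q^2)) (q^2) * qinf (q^4) (q^4) - mock_nu q))
     \<and> (q \<noteq> 0 \<longrightarrow>
        ((\<lambda>n::int. q powi (n^2 + n) / qpochZ (-q) (q^2) (n + 1)) has_sum
          (2 * qinf (-(q^2)) (q^2) * qinf (-(q^2)) (q^2) * qinf (q^4) (q^4))) UNIV)
     \<and> cesaro_sums (\<lambda>r. qpoch q (q^2) r * (-1) ^ r)
        (qinf (-q) (q^2) * qinf (-q) (q^2) * qinf (q^2) (q^2)
           / (2 * (qinf q (q^2) * qinf (-(q^2)) (q^2))) - mock_psi q)
     \<and> (q \<noteq> 0 \<longrightarrow>
        (\<exists>A B. (\<lambda>n. q powi ((int n)^2) / qpochZ q (q^2) (int n)) sums A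
           \<and> cesaro_sums (\<lambda>m. q powi ((- int (Suc m))^2) / qpochZ q (q^2) (- int (Suc m))) B
           \<and> A + B = qinf (-q) (q^2) * qinf (-q) (q^2) * qinf (q^2) (q^2)
                      / (2 * (qinf q (q^2) * qinf (-(q^2)) (q^2)))))"
  using phi_tail_sums[OF assms] phi_bilateral_has_sum[OF assms]
    nu_tail_sums[OF assms] nu_bilateral_has_sum[OF assms]
    psi_cesaro_sums[OF assms] psi_bilateral_cesaro_sums[OF assms]
  by blast

end
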